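(* QHC is a strongly conservative extension of intuitionistic predicate calculus QH: if $\alpha_1,\dots,\alpha_n,\alpha$ are problems built from atomic problems and $\bot$ using only intuitionistic connectives and quantifiers (no $!$, $?$), and $\alpha_1,\dots,\alpha_n\vdash_{\mathrm{QHC}}\alpha$, then $\alpha_1,\dots,\alpha_n\vdash_{\mathrm{QH}}\alpha$.
   Context: QHC is a two-sorted first-order calculus. Its only terms are individual variables. Every formula is either a problem (denoted by Greek letters $\alpha,\beta,\gamma,\dots$) or a proposition (denoted by Latin letters $p,q,\dots$). Atomic formulas are proposition variables $p(t_1,\dots,t_n)$ (of proposition type), problem variables $\pi(t_1,\dots,t_n)$ (of problem type), and the constants $0$ (a proposition, classical falsity) and $\bot$ (a problem, intuitionistic absurdity). Propositions are closed under the classical connectives $\land,\lor,\to$ and quantifiers $\exists,\forall$; problems are closed under the intuitionistic connectives $\land,\lor,\to$ and quantifiers $\exists,\forall$ (the same symbols are used, distinguished by the type of the arguments). $\neg p$ abbreviates $p\to 0$, $\neg\alpha$ abbreviates $\alpha\to\bot$, and $\leftrightarrow$ is defined as usual. There are two type-conversion operators: if $p$ is a proposition then $!p$ is a problem, and if $\alpha$ is a problem then $?\alpha$ is a proposition. Deductive system of QHC: all axioms and rules of classical predicate logic applied to all propositions; all postulates and rules of intuitionistic predicate logic applied to all problems; the rules $p\,/\,!p$ and $\alpha\,/\,?\alpha$; and the schemas $?!p\to p$; $\alpha\to\, !?\alpha$; $!(p\to q)\to(!p\to !q)$; $?(\alpha\to\beta)\to(?\alpha\to ?\beta)$; $!0\to\bot$;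 $?(\alpha\land\beta)\leftrightarrow ?\alpha\land ?\beta$; $?(\alpha\lor\beta)\leftrightarrow ?\alpha\lor ?\beta$; $?\bot\to 0$; $?\exists x\,\alpha(x)\leftrightarrow\exists x\,?\alpha(x)$; $?\forall x\,\alpha(x)\to\forall x\,?\alpha(x)$ (usual variable side conditions implicit). $\vdash A$ means $A$ is derivable in QHC; $A\Rightarrow B$ means $\vdash A\to B$ and $A\Leftrightarrow B$ means $\vdash A\leftrightarrow B$ (with $A,B$ of the same type); $A\vdash B$ means $B$ is derivable in QHC from the premise $A$. Notation: $\Box p := ?!p$ (a proposition) and $\nabla\alpha := !?\alpha$ (a problem). QC and QH denote classical and intuitionistic predicate calculus. *)

theory Defs
  imports Main
begin

text \<open>Individual variables are natural numbers (de Bruijn indices); the only terms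
are variables.  Predicate / problem variables are named by natural numbers and
applied to a list of individual variables.\<close>

datatype qprop =
    PAtom nat "nat list"
  | PZero
  | PConj qprop qprop
  | PDisj qprop qprop
  | PImp qprop qprop
  | PEx qprop                    \<comment> \<open>binds index 0\<close>
  | PAll qprop
  | Quest qprob
and qprob =
    AAtom nat "nat list"
  | ABot
  | AConj qprob qprob
  | ADisj qprob qprob
  | AImp qprob qprob
  | AEx qprob
  | AAll qprob
  | Bang qprop

definition liftr :: "(nat \<Rightarrow> nat) \<Rightarrow> nat \<Rightarrow> nat" where
  "liftr \<rho> i = (case i of 0 \<Rightarrow> 0 | Suc j \<Rightarrow> Suc (\<rho> j))"

primrec renP :: "(nat \<Rightarrow> nat) \<Rightarrow> qprop \<Rightarrow> qprop"
and renA :: "(nat \<Rightarrow> nat) \<Rightarrow> qprob \<Rightarrow> qprob" where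
  "renP \<rho> (PAtom n ts) = PAtom n (map \<rho> ts)"
| "renP \<rho> PZero = PZero"
| "renP \<rho> (PConj p q) = PConj (renP \<rho> p) (renP \<rho> q)"
| "renP \<rho> (PDisj p q) = PDisj (renP \<rho> p) (renP \<rho> q)"
| "renP \<rho> (PImp p q) = PImp (renP \<rho> p) (renP \<rho> q)"
| "renP \<rho> (PEx p) = PEx (renP (liftr \<rho>) p)"
| "renP \<rho> (PAll p) = PAll (renP (liftr \<rho>) p)"
| "renP \<rho> (Quest a) = Quest (renA \<rho> a)"
| "renA \<rho> (AAtom n ts) = AAtom n (map \<rho> ts)"
| "renA \<rho> ABot = ABot"
| "renA \<rho> (AConj a b) = AConj (renA \<rho> a) (renA \<rho> b)"
| "renA \<rho> (ADisj a b) = ADisj (renA \<rho> a) (renA \<rho> b)"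
| "renA \<rho> (AImp a b) = AImp (renA \<rho> a) (renA \<rho> b)"
| "renA \<rho> (AEx a) = AEx (renA (liftr \<rho>) a)"
| "renA \<rho> (AAll a) = AAll (renA (liftr \<rho>) a)"
| "renA \<rho> (Bang p) = Bang (renP \<rho> p)"

primrec freeP :: "qprop \<Rightarrow> nat set" and freeA :: "qprob \<Rightarrow> nat set" where
  "freeP (PAtom n ts) = set ts"
| "freeP PZero = {}"
| "freeP (PConj p q) = freeP p \<union> freeP q"
| "freeP (PDisj p q) = freeP p \<union> freeP q"
| "freeP (PImp p q) = freeP p \<union> freeP q"
| "freeP (PEx p) = (\<lambda>i. i - 1) ` (freeP p - {0})"
| "freeP (PAll p) = (\<lambda>i. i - 1) ` (freeP p - {0})"
| "freeP (Quest a) = freeA a"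
| "freeA (AAtom n ts) = set ts"
| "freeA ABot = {}"
| "freeA (AConj a b) = freeA a \<union> freeA b"
| "freeA (ADisj a b) = freeA a \<union> freeA b"
| "freeA (AImp a b) = freeA a \<union> freeA b"
| "freeA (AEx a) = (\<lambda>i. i - 1) ` (freeA a - {0})"
| "freeA (AAll a) = (\<lambda>i. i - 1) ` (freeA a - {0})"
| "freeA (Bang p) = freeP p"

text \<open>\<open>inst x A\<close>: the body A of a quantifier with the bound variable replaced by
the variable x, i.e. A(x).  \<open>abst x A\<close>: turns a formula A(x) into a quantifier
body binding x (so that \<open>PAll (abstP x A)\<close> is \<open>\<forall>x A(x)\<close>).\<close>
definition instv :: "nat \<Rightarrow> nat \<Rightarrow> nat" where
  "instv x i = (case i of 0 \<Rightarrow> x | Suc j \<Rightarrow> j)"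
definition abstv :: "nat \<Rightarrow> nat \<Rightarrow> nat" where
  "abstv x i = (if i = x then 0 else Suc i)"

abbreviation "instP x p \<equiv> renP (instv x) p"
abbreviation "instA x a \<equiv> renA (instv x) a"
abbreviation "abstP x p \<equiv> renP (abstv x) p"
abbreviation "abstA x a \<equiv> renA (abstv x) a"

definition PIff :: "qprop \<Rightarrow> qprop \<Rightarrow> qprop" where
  "PIff p q = PConj (PImp p q) (PImp q p)"

text \<open>Pure problems: built from atomic problems and bot with intuitionistic
connectives and quantifiers only (no ! and hence no ?).\<close>
primrec pureA :: "qprob \<Rightarrow> bool" where
  "pureA (AAtom n ts) = True"
| "pureA ABot = True"
| "pureA (AConj a b) = (pureA a \<and> pureA b)"
| "pureA (ADisj a b) = (pureA a \<and> pureA b)"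
| "pureA (AImp a b) = (pureA a \<and> pureA b)"
| "pureA (AEx a) = pureA a"
| "pureA (AAll a) = pureA a"
| "pureA (Bang p) = False"

inductive cl_ax :: "qprop \<Rightarrow> bool" where
  "cl_ax (PImp p (PImp q p))"
| "cl_ax (PImp (PImp p q) (PImp (PImp p (PImp q r)) (PImp p r)))"
| "cl_ax (PImp (PConj p q) p)"
| "cl_ax (PImp (PConj p q) q)"
| "cl_ax (PImp p (PImp q (PConj p q)))"
| "cl_ax (PImp p (PDisj p q))"
| "cl_ax (PImp q (PDisj p q))"
| "cl_ax (PImp (PImp p r) (PImp (PImp q r) (PImp (PDisj p q) r)))"
| "cl_ax (PImp PZero p)"
| "cl_ax (PImp (PImp (PImp p PZero) PZero) p)"
| "cl_ax (PImp (PAll p) (instP x p))"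
| "cl_ax (PImp (instP x p) (PEx p))"

inductive int_ax :: "qprob \<Rightarrow> bool" where
  "int_ax (AImp a (AImp b a))"
| "int_ax (AImp (AImp a b) (AImp (AImp a (AImp b c)) (AImp a c)))"
| "int_ax (AImp (AConj a b) a)"
| "int_ax (AImp (AConj a b) b)"
| "int_ax (AImp a (AImp b (AConj a b)))"
| "int_ax (AImp a (ADisj a b))"
| "int_ax (AImp b (ADisj a b))"
| "int_ax (AImp (AImp a c) (AImp (AImp b c) (AImp (ADisj a b) c)))"
| "int_ax (AImp ABot a)"
| "int_ax (AImp (AAll a) (instA x a))"
| "int_ax (AImp (instA x a) (AEx a))"

inductive qhc_axP :: "qprop \<Rightarrow> bool" where
  "qhc_axP (PImp (Quest (Bang p)) p)"
| "qhc_axP (PImp (Quest (AImp a b)) (PImp (Quest a) (Quest b)))"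
| "qhc_axP (PIff (Quest (AConj a b)) (PConj (Quest a) (Quest b)))"
| "qhc_axP (PIff (Quest (ADisj a b)) (PDisj (Quest a) (Quest b)))"
| "qhc_axP (PImp (Quest ABot) PZero)"
| "qhc_axP (PIff (Quest (AEx a)) (PEx (Quest a)))"
| "qhc_axP (PImp (Quest (AAll a)) (PAll (Quest a)))"

inductive qhc_axA :: "qprob \<Rightarrow> bool" where
  "qhc_axA (AImp a (Bang (Quest a)))"
| "qhc_axA (AImp (Bang (PImp p q)) (AImp (Bang p) (Bang q)))"
| "qhc_axA (AImp (Bang PZero) ABot)"

inductive qhcP :: "qprob set \<Rightarrow> qprop \<Rightarrow> bool"
and qhcA :: "qprob set \<Rightarrow> qprob \<Rightarrow> bool" for \<Gamma> where
  p_ax: "cl_ax p \<Longrightarrow> qhcP \<Gamma> p"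
| p_qax: "qhc_axP p \<Longrightarrow> qhcP \<Gamma> p"
| p_mp: "qhcP \<Gamma> (PImp p q) \<Longrightarrow> qhcP \<Gamma> p \<Longrightarrow> qhcP \<Gamma> q"
| p_all: "qhcP \<Gamma> (PImp q p) \<Longrightarrow> x \<notin> freeP q \<Longrightarrow> qhcP \<Gamma> (PImp q (PAll (abstP x p)))"
| p_ex: "qhcP \<Gamma> (PImp p q) \<Longrightarrow> x \<notin> freeP q \<Longrightarrow> qhcP \<Gamma> (PImp (PEx (abstP x p)) q)"
| p_quest: "qhcA \<Gamma> a \<Longrightarrow> qhcP \<Gamma> (Quest a)"
| a_hyp: "a \<in> \<Gamma> \<Longrightarrow> qhcA \<Gamma> a"
| a_ax: "int_ax a \<Longrightarrow> qhcA \<Gamma> a"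
| a_qax: "qhc_axA a \<Longrightarrow> qhcA \<Gamma> a"
| a_mp: "qhcA \<Gamma> (AImp a b) \<Longrightarrow> qhcA \<Gamma> a \<Longrightarrow> qhcA \<Gamma> b"
| a_all: "qhcA \<Gamma> (AImp b a) \<Longrightarrow> x \<notin> freeA b \<Longrightarrow> qhcA \<Gamma> (AImp b (AAll (abstA x a)))"
| a_ex: "qhcA \<Gamma> (AImp a b) \<Longrightarrow> x \<notin> freeA b \<Longrightarrow> qhcA \<Gamma> (AImp (AEx (abstA x a)) b)"
| a_bang: "qhcP \<Gamma> p \<Longrightarrow> qhcA \<Gamma> (Bang p)"

inductive qh :: "qprob set \<Rightarrow> qprob \<Rightarrow> bool" for \<Gamma> where
  qh_hyp: "a \<in> \<Gamma> \<Longrightarrow> pureA a \<Longrightarrow> qh \<Gamma> a"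
| qh_ax: "int_ax a \<Longrightarrow> pureA a \<Longrightarrow> qh \<Gamma> a"
| qh_mp: "qh \<Gamma> (AImp a b) \<Longrightarrow> qh \<Gamma> a \<Longrightarrow> qh \<Gamma> b"
| qh_all: "qh \<Gamma> (AImp b a) \<Longrightarrow> x \<notin> freeA b \<Longrightarrow> qh \<Gamma> (AImp b (AAll (abstA x a)))"
| qh_ex: "qh \<Gamma> (AImp a b) \<Longrightarrow> x \<notin> freeA b \<Longrightarrow> qh \<Gamma> (AImp (AEx (abstA x a)) b)"

end

theory Submission
  imports Defs
begin

text \<open>Translate QHC into QH. A problem goes to itself with every \<open>!p\<close> replaced by the
translation of \<open>p\<close>, so pure problems are fixed. A proposition goes to a negative problem:
classical atoms and \<open>0\<close> become \<open>\<bottom>\<close>, \<open>\<or>\<close> and \<open>\<exists>\<close> become the double negations of their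
intuitionistic counterparts, and \<open>?\<alpha>\<close> becomes \<open>\<not>\<not>\<alpha>\<close>. Negative problems are stable under
double negation, which validates classical logic, and the QHC schemas turn into intuitionistic
laws of double negation. So a QHC derivation from pure premises becomes a QH derivation of the
translated conclusion, and a pure conclusion is its own translation.\<close>

lemma liftr_comp: "liftr \<sigma> \<circ> liftr \<rho> = liftr (\<sigma> \<circ> \<rho>)"
  by (auto simp: liftr_def fun_eq_iff split: nat.split)

lemma liftr_id: "liftr (\<lambda>i. i) = (\<lambda>i. i)"
  by (auto simp: liftr_def fun_eq_iff split: nat.split)

lemma ren_comp:
  "renP \<sigma> (renP \<rho> p) = renP (\<sigma> \<circ> \<rho>) p"
  "renA \<sigma> (renA \<rho> a) = renA (\<sigma> \<circ> \<rho>) a"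
  by (induct p and a arbitrary: \<sigma> \<rho> and \<sigma> \<rho>) (auto simp: liftr_comp)

lemma ren_id: "renP id p = p" "renA id a = a"
  by (induct p and a) (simp_all add: liftr_id id_def)

lemma liftr_cong:
  "\<forall>i\<in>S - {0}. \<rho> (i - Suc 0) = \<sigma> (i - Suc 0) \<Longrightarrow> \<forall>i\<in>S. liftr \<rho> i = liftr \<sigma> i"
  by (force simp: liftr_def split: nat.split)

lemma ren_cong:
  "\<forall>i\<in>freeP p. \<rho> i = \<sigma> i \<Longrightarrow> renP \<rho> p = renP \<sigma> p"
  "\<forall>i\<in>freeA a. \<rho> i = \<sigma> i \<Longrightarrow> renA \<rho> a = renA \<sigma> a"
  by (induct p and a arbitrary: \<rho> \<sigma> and \<rho> \<sigma>) (simp_all, (metis liftr_cong)+)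

lemma abstA_instA: "x \<notin> freeA (AAll a) \<Longrightarrow> abstA x (instA x a) = a"
  by (subst ren_comp, subst ren_id(2)[symmetric], rule ren_cong)
     (force simp: abstv_def instv_def split: nat.split)

lemma finite_free: "finite (freeP p)" "finite (freeA a)"
  by (induct p and a) auto

lemma ex_fresh_var: "\<exists>x. x \<notin> freeA a"
  using finite_free(2) infinite_UNIV_nat ex_new_if_finite by blast

abbreviation ANeg :: "qprob \<Rightarrow> qprob" where "ANeg a \<equiv> AImp a ABot"

primrec trP :: "qprop \<Rightarrow> qprob" and trA :: "qprob \<Rightarrow> qprob" where
  "trP (PAtom n ts) = ABot"
| "trP PZero = ABot"
| "trP (PConj p q) = AConj (trP p) (trP q)"
| "trP (PDisj p q) = ANeg (ANeg (ADisj (trP p) (trP q)))"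
| "trP (PImp p q) = AImp (trP p) (trP q)"
| "trP (PEx p) = ANeg (ANeg (AEx (trP p)))"
| "trP (PAll p) = AAll (trP p)"
| "trP (Quest a) = ANeg (ANeg (trA a))"
| "trA (AAtom n ts) = AAtom n ts"
| "trA ABot = ABot"
| "trA (AConj a b) = AConj (trA a) (trA b)"
| "trA (ADisj a b) = ADisj (trA a) (trA b)"
| "trA (AImp a b) = AImp (trA a) (trA b)"
| "trA (AEx a) = AEx (trA a)"
| "trA (AAll a) = AAll (trA a)"
| "trA (Bang p) = trP p"

lemma pureA_tr [simp]: "pureA (trP p)" "pureA (trA a)"
  by (induct p and a) auto

lemma trA_pure: "pureA a \<Longrightarrow> trA a = a"
  by (induct a) auto

lemma tr_ren: "trP (renP \<rho> p) = renA \<rho> (trP p)" "trA (renA \<rho> a) = renA \<rho> (trA a)"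
  by (induct p and a arbitrary: \<rho> and \<rho>) auto

lemma free_tr: "freeA (trP p) \<subseteq> freeP p" "freeA (trA a) \<subseteq> freeA a"
  by (induct p and a) auto

lemma int_ax_trA: "int_ax a \<Longrightarrow> int_ax (trA a)"
  by (induct rule: int_ax.induct) (auto intro: int_ax.intros simp: tr_ren)

text \<open>QH without the purity restriction, with a list \<open>H\<close> of local hypotheses so that the
deduction theorem holds; the quantifier rules require \<open>H = []\<close> since \<open>H\<close> may contain the
variable.\<close>

inductive il :: "qprob set \<Rightarrow> qprob list \<Rightarrow> qprob \<Rightarrow> bool" for \<Gamma> where
  il_hyp: "a \<in> set H \<Longrightarrow> il \<Gamma> H a"
| il_prem: "a \<in> \<Gamma> \<Longrightarrow> il \<Gamma> H a"
| il_ax: "int_ax a \<Longrightarrow> il \<Gamma> H a"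
| il_mp: "il \<Gamma> H (AImp a b) \<Longrightarrow> il \<Gamma> H a \<Longrightarrow> il \<Gamma> H b"
| il_all: "il \<Gamma> [] (AImp b a) \<Longrightarrow> x \<notin> freeA b \<Longrightarrow> il \<Gamma> H (AImp b (AAll (abstA x a)))"
| il_ex: "il \<Gamma> [] (AImp a b) \<Longrightarrow> x \<notin> freeA b \<Longrightarrow> il \<Gamma> H (AImp (AEx (abstA x a)) b)"

lemma il_qh: "il \<Gamma> [] a \<Longrightarrow> \<forall>b\<in>\<Gamma>. pureA b \<Longrightarrow> qh \<Gamma> (trA a)"
proof (induction "[] :: qprob list" a rule: il.induct)
  case (il_prem a)
  then show ?case by (simp add: trA_pure qh_hyp)
next
  case (il_ax a)
  then show ?case by (simp add: qh_ax int_ax_trA)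
next
  case (il_mp a b)
  then show ?case by (auto intro: qh_mp)
next
  case (il_all b a x)
  then show ?case using free_tr(2) by (auto simp: tr_ren intro: qh_all)
next
  case (il_ex a b x)
  then show ?case using free_tr(2) by (auto simp: tr_ren intro: qh_ex)
qed simp

lemma il_K: "il \<Gamma> H a \<Longrightarrow> il \<Gamma> H (AImp h a)"
  by (rule il_mp[OF il_ax]) (rule int_ax.intros)

lemma il_imp_refl: "il \<Gamma> H (AImp a a)"
  by (rule il_mp[OF il_mp[OF il_ax il_ax] il_ax]) (rule int_ax.intros)+

lemma il_impI: "il \<Gamma> (h # H) b \<Longrightarrow> il \<Gamma> H (AImp h b)"
proof (induction "h # H" b arbitrary: H rule: il.induct)
  case (il_mp a b)
  have "il \<Gamma> H (AImp (AImp h a) (AImp (AImp h (AImp a b)) (AImp h b)))"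
    by (rule il_ax) (rule int_ax.intros)
  then show ?case using il_mp.hyps by (meson il.il_mp)
qed (auto intro: il_K il_imp_refl il.intros)

lemma il_weaken: "il \<Gamma> H a \<Longrightarrow> set H \<subseteq> set H' \<Longrightarrow> il \<Gamma> H' a"
  by (induction H a arbitrary: H' rule: il.induct) (auto intro: il.intros)

lemma il_ax_mp: "int_ax (AImp a b) \<Longrightarrow> il \<Gamma> H a \<Longrightarrow> il \<Gamma> H b"
  by (rule il_mp[OF il_ax])

lemma il_conjI: "il \<Gamma> H a \<Longrightarrow> il \<Gamma> H b \<Longrightarrow> il \<Gamma> H (AConj a b)"
  by (rule il_mp[OF il_ax_mp]) (rule int_ax.intros)

lemma il_conjunct1: "il \<Gamma> H (AConj a b) \<Longrightarrow> il \<Gamma> H a"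
  and il_conjunct2: "il \<Gamma> H (AConj a b) \<Longrightarrow> il \<Gamma> H b"
  and il_disjI1: "il \<Gamma> H a \<Longrightarrow> il \<Gamma> H (ADisj a b)"
  and il_disjI2: "il \<Gamma> H b \<Longrightarrow> il \<Gamma> H (ADisj a b)"
  and il_allE: "il \<Gamma> H (AAll a) \<Longrightarrow> il \<Gamma> H (instA x a)"
  and il_exI: "il \<Gamma> H (instA x a) \<Longrightarrow> il \<Gamma> H (AEx a)"
  by (rule il_ax_mp, rule int_ax.intros, assumption)+

lemma il_disjE:
  "il \<Gamma> H (ADisj a b) \<Longrightarrow> il \<Gamma> (a # H) c \<Longrightarrow> il \<Gamma> (b # H) c \<Longrightarrow> il \<Gamma> H c"
  by (rule il_mp[OF il_mp[OF il_ax_mp]], rule int_ax.intros) (auto intro: il_impI)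

lemma il_Cons: "il \<Gamma> H a \<Longrightarrow> il \<Gamma> (b # H) a"
  by (erule il_weaken) auto

lemma il_hyp_Cons: "il \<Gamma> (a # H) a"
  by (simp add: il_hyp)

lemma il_dnI: "il \<Gamma> H a \<Longrightarrow> il \<Gamma> H (ANeg (ANeg a))"
  by (rule il_impI, rule il_mp[OF il_hyp_Cons il_Cons])

lemma il_dn_bind:
  assumes "il \<Gamma> H (ANeg (ANeg a))" and "il \<Gamma> (a # H) (ANeg c)"
  shows "il \<Gamma> H (ANeg c)"
proof (rule il_impI)
  have "il \<Gamma> (a # c # H) (ANeg c)"
    using assms(2) by (rule il_weaken) auto
  then have "il \<Gamma> (c # H) (ANeg a)"
    by (rule il_impI[OF il_mp[OF _ il_hyp]]) simp
  then show "il \<Gamma> (c # H) ABot"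
    using il_Cons[OF assms(1)] by (rule il_mp[rotated])
qed

lemma il_dn_map: "il \<Gamma> H (ANeg (ANeg a)) \<Longrightarrow> il \<Gamma> (a # H) b \<Longrightarrow> il \<Gamma> H (ANeg (ANeg b))"
  by (erule il_dn_bind) (erule il_dnI)

lemma il_allI:
  "il \<Gamma> [] (AImp b (instA x a)) \<Longrightarrow> x \<notin> freeA b \<Longrightarrow> x \<notin> freeA (AAll a) \<Longrightarrow>
   il \<Gamma> H (AImp b (AAll a))"
  using il_all[of \<Gamma> b "instA x a" x H] by (simp add: abstA_instA)

lemma il_exE:
  "il \<Gamma> [] (AImp (instA x a) b) \<Longrightarrow> x \<notin> freeA b \<Longrightarrow> x \<notin> freeA (AEx a) \<Longrightarrow>
   il \<Gamma> H (AImp (AEx a) b)"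
  using il_ex[of \<Gamma> "instA x a" b x H] abstA_instA[of x a] by simp

primrec negative :: "qprob \<Rightarrow> bool" where
  "negative (AAtom n ts) = False"
| "negative ABot = True"
| "negative (AConj a b) = (negative a \<and> negative b)"
| "negative (ADisj a b) = False"
| "negative (AImp a b) = negative b"
| "negative (AEx a) = False"
| "negative (AAll a) = negative a"
| "negative (Bang p) = False"

text \<open>Generalised over renamings so that the \<open>\<forall>\<close> case can use the induction hypothesis for
an instance of the body.\<close>

lemma il_dnE_negative_ren:
  "negative c \<Longrightarrow> il \<Gamma> H (ANeg (ANeg (renA \<rho> c))) \<Longrightarrow> il \<Gamma> H (renA \<rho> c)"
proof (induction c arbitrary: \<rho> H)
  case ABot
  have "il \<Gamma> H (ANeg ABot)" by (rule il_impI[OF il_hyp_Cons])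
  with ABot.prems(2) show ?case by (simp add: il_mp)
next
  case (AConj a b)
  have "il \<Gamma> H (ANeg (ANeg (renA \<rho> a)))"
    using AConj.prems(2)[simplified] by (rule il_dn_map) (rule il_conjunct1[OF il_hyp_Cons])
  moreover have "il \<Gamma> H (ANeg (ANeg (renA \<rho> b)))"
    using AConj.prems(2)[simplified] by (rule il_dn_map) (rule il_conjunct2[OF il_hyp_Cons])
  ultimately show ?case using AConj by (simp add: il_conjI)
next
  case (AImp a b)
  have "il \<Gamma> (renA \<rho> a # H) (ANeg (ANeg (renA \<rho> b)))"
    using il_Cons[OF AImp.prems(2)[simplified]]
    by (rule il_dn_map) (rule il_mp[OF il_hyp_Cons il_Cons[OF il_hyp_Cons]])
  then show ?case using AImp by (simp add: il_impI)
next
  case (AAll c)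
  let ?d = "renA (liftr \<rho>) c"
  obtain x where x: "x \<notin> freeA (AAll ?d)" using ex_fresh_var by blast
  have "il \<Gamma> [ANeg (ANeg (AAll ?d))] (ANeg (ANeg (instA x ?d)))"
    using il_hyp_Cons by (rule il_dn_map) (rule il_allE[OF il_hyp_Cons])
  then have "il \<Gamma> [ANeg (ANeg (AAll ?d))] (instA x ?d)"
    using AAll.IH[where \<rho>="instv x \<circ> liftr \<rho>"] AAll.prems(1) by (simp add: ren_comp comp_def)
  then have "il \<Gamma> H (AImp (ANeg (ANeg (AAll ?d))) (AAll ?d))"
    using x by (intro il_allI il_impI) auto
  then show ?case using AAll.prems(2) by (simp add: il_mp)
qed simp_all

lemma il_dnE_negative: "negative c \<Longrightarrow> il \<Gamma> H (ANeg (ANeg c)) \<Longrightarrow> il \<Gamma> H c"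
  using il_dnE_negative_ren[of c \<Gamma> H id] by (simp add: ren_id)

lemma il_dn_imp_negative:
  "negative c \<Longrightarrow> il \<Gamma> H (AImp a c) \<Longrightarrow> il \<Gamma> H (AImp (ANeg (ANeg a)) c)"
  by (rule il_impI, erule il_dnE_negative, rule il_dn_map[OF il_hyp_Cons])
     (rule il_mp[OF il_Cons[OF il_Cons] il_hyp_Cons])

lemma negative_trP: "negative (trP p)"
  by (induct p) simp_all

lemma il_dnI_imp: "il \<Gamma> H (AImp a (ANeg (ANeg a)))"
  by (rule il_impI, rule il_dnI, rule il_hyp_Cons)

lemma il_dn_imp_dist:
  "il \<Gamma> H (AImp (ANeg (ANeg (AImp a b))) (AImp (ANeg (ANeg a)) (ANeg (ANeg b))))"
  by (rule il_impI, rule il_impI, rule il_dn_bind[OF il_Cons[OF il_hyp_Cons]],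
      rule il_dn_map[OF il_Cons[OF il_hyp_Cons]],
      rule il_mp[OF il_Cons[OF il_hyp_Cons] il_hyp_Cons])

lemma il_dn_conj_dist:
  "il \<Gamma> H (AImp (ANeg (ANeg (AConj a b))) (AConj (ANeg (ANeg a)) (ANeg (ANeg b))))"
  by (rule il_impI, rule il_conjI; rule il_dn_map[OF il_hyp_Cons])
     (rule il_conjunct1[OF il_hyp_Cons] il_conjunct2[OF il_hyp_Cons])+

lemma il_conj_dn:
  "il \<Gamma> H (AImp (AConj (ANeg (ANeg a)) (ANeg (ANeg b))) (ANeg (ANeg (AConj a b))))"
  by (rule il_impI, rule il_dn_bind[OF il_conjunct1[OF il_hyp_Cons]],
      rule il_dn_map[OF il_conjunct2[OF il_Cons[OF il_hyp_Cons]]],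
      rule il_conjI[OF il_Cons[OF il_hyp_Cons] il_hyp_Cons])

lemma il_dn_disj_dist:
  "il \<Gamma> H (AImp (ANeg (ANeg (ADisj a b))) (ANeg (ANeg (ADisj (ANeg (ANeg a)) (ANeg (ANeg b))))))"
  by (rule il_impI, rule il_dn_map[OF il_hyp_Cons], rule il_disjE[OF il_hyp_Cons])
     (rule il_disjI1 il_disjI2, rule il_dnI, rule il_hyp_Cons)+

lemma il_disj_dn:
  "il \<Gamma> H (AImp (ANeg (ANeg (ADisj (ANeg (ANeg a)) (ANeg (ANeg b))))) (ANeg (ANeg (ADisj a b))))"
  by (rule il_impI, rule il_dn_bind[OF il_hyp_Cons], rule il_disjE[OF il_hyp_Cons])
     (rule il_dn_map[OF il_hyp_Cons], rule il_disjI1 il_disjI2, rule il_hyp_Cons)+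

lemma il_ex_dnI: "il \<Gamma> H (AImp (AEx a) (AEx (ANeg (ANeg a))))"
proof -
  obtain x where x: "x \<notin> freeA (AEx a)" using ex_fresh_var by blast
  have "il \<Gamma> [] (AImp (instA x a) (AEx (ANeg (ANeg a))))"
    by (rule il_impI, rule il_exI[of _ _ x]) (simp add: il_dnI il_hyp_Cons)
  then show ?thesis by (rule il_exE) (use x in auto)
qed

lemma il_ex_dnE: "il \<Gamma> H (AImp (AEx (ANeg (ANeg a))) (ANeg (ANeg (AEx a))))"
proof -
  obtain x where x: "x \<notin> freeA (AEx a)" using ex_fresh_var by blast
  have "il \<Gamma> [] (AImp (instA x (ANeg (ANeg a))) (ANeg (ANeg (AEx a))))"
    by (simp, rule il_impI, rule il_dn_map[OF il_hyp_Cons]) (rule il_exI[OF il_hyp_Cons])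
  then show ?thesis by (rule il_exE) (use x in auto)
qed

lemma il_dn_ex_dist:
  "il \<Gamma> H (AImp (ANeg (ANeg (AEx a))) (ANeg (ANeg (AEx (ANeg (ANeg a))))))"
  by (rule il_impI, rule il_dn_map[OF il_hyp_Cons], rule il_mp[OF il_ex_dnI il_hyp_Cons])

lemma il_ex_dn:
  "il \<Gamma> H (AImp (ANeg (ANeg (AEx (ANeg (ANeg a))))) (ANeg (ANeg (AEx a))))"
  by (rule il_impI, rule il_dn_bind[OF il_hyp_Cons], rule il_mp[OF il_ex_dnE il_hyp_Cons])

lemma il_dn_all_dist: "il \<Gamma> H (AImp (ANeg (ANeg (AAll a))) (AAll (ANeg (ANeg a))))"
proof -
  obtain x where x: "x \<notin> freeA (AAll a)" using ex_fresh_var by blast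
  have "il \<Gamma> [] (AImp (ANeg (ANeg (AAll a))) (instA x (ANeg (ANeg a))))"
    by (simp, rule il_impI, rule il_dn_map[OF il_hyp_Cons]) (rule il_allE[OF il_hyp_Cons])
  then show ?thesis by (rule il_allI) (use x in auto)
qed

lemma il_trP_cl_ax: "cl_ax p \<Longrightarrow> il \<Gamma> H (trP p)"
proof (induction rule: cl_ax.induct)
  case (6 p q)
  show ?case by (simp, rule il_impI, rule il_dnI, rule il_disjI1, rule il_hyp_Cons)
next
  case (7 q p)
  show ?case by (simp, rule il_impI, rule il_dnI, rule il_disjI2, rule il_hyp_Cons)
next
  case (8 p r q)
  have "il \<Gamma> (AImp (trP q) (trP r) # AImp (trP p) (trP r) # H)
      (AImp (ADisj (trP p) (trP q)) (trP r))"
    by (rule il_impI, rule il_disjE[OF il_hyp_Cons]; rule il_mp[OF il_hyp il_hyp_Cons]) simp_all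
  then have "il \<Gamma> (AImp (trP q) (trP r) # AImp (trP p) (trP r) # H)
      (AImp (ANeg (ANeg (ADisj (trP p) (trP q)))) (trP r))"
    by (rule il_dn_imp_negative[OF negative_trP])
  then show ?case using il_impI[OF il_impI] by simp
next
  case (10 p)
  show ?case by (simp add: il_dn_imp_negative[OF negative_trP il_imp_refl])
next
  case (12 x p)
  show ?case by (simp add: tr_ren, rule il_impI, rule il_dnI, rule il_exI, rule il_hyp_Cons)
qed (auto intro!: il_ax intro: int_ax.intros simp: tr_ren)

lemma il_trP_qhc_axP: "qhc_axP p \<Longrightarrow> il \<Gamma> H (trP p)"
proof (induction rule: qhc_axP.induct)
  case (1 p)
  show ?case by (simp add: il_dn_imp_negative[OF negative_trP il_imp_refl])
next
  case 5
  show ?case using il_dn_imp_negative[of ABot, OF _ il_imp_refl] by simp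
qed (simp_all add: PIff_def il_conjI il_dn_imp_dist il_dn_conj_dist il_conj_dn il_dn_disj_dist
       il_disj_dn il_dn_ex_dist il_ex_dn il_dn_all_dist)

lemma il_trA_qhc_axA: "qhc_axA a \<Longrightarrow> il \<Gamma> H (trA a)"
  by (induction rule: qhc_axA.induct) (simp_all add: il_dnI_imp il_imp_refl)

lemma il_tr_qhc:
  assumes "\<forall>b\<in>\<Gamma>. pureA b"
  shows "qhcP \<Gamma> p \<Longrightarrow> il \<Gamma> [] (trP p)" and "qhcA \<Gamma> a \<Longrightarrow> il \<Gamma> [] (trA a)"
proof (induction rule: qhcP_qhcA.inducts)
  case (p_all q p x)
  then show ?case using free_tr(1) by (auto simp: tr_ren intro: il_all)
next
  case (p_ex p q x)
  then have "il \<Gamma> [] (AImp (AEx (abstA x (trP p))) (trP q))"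
    using free_tr(1) by (auto intro: il_ex)
  then show ?case by (simp add: tr_ren il_dn_imp_negative[OF negative_trP])
next
  case (a_hyp a)
  then show ?case using assms by (simp add: trA_pure il_prem)
next
  case (a_all b a x)
  then show ?case using free_tr(2) by (auto simp: tr_ren intro: il_all)
next
  case (a_ex a b x)
  then show ?case using free_tr(2) by (auto simp: tr_ren intro: il_ex)
qed (auto intro: il_trP_cl_ax il_trP_qhc_axP il_trA_qhc_axA il_ax int_ax_trA il_mp il_dnI)

theorem theorem3p5:
  fixes \<alpha>s :: "qprob list" and \<alpha> :: qprob
  assumes "\<forall>\<beta>\<in>set \<alpha>s. pureA \<beta>"
    and "pureA \<alpha>"
    and "qhcA (set \<alpha>s) \<alpha>"
  shows "qh (set \<alpha>s) \<alpha>"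
proof -
  have "il (set \<alpha>s) [] (trA \<alpha>)"
    using il_tr_qhc(2)[OF assms(1) assms(3)] .
  then have "qh (set \<alpha>s) (trA (trA \<alpha>))"
    using assms(1) by (rule il_qh)
  then show ?thesis
    using assms(2) by (simp add: trA_pure)
qed

end
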